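(* For any collection $\mathcal X$ of arcs of the $\infty$-gon, the collection $\mathsf{nc}\,\mathcal X$ is a Ptolemy diagram.
   Context: An arc of the $\infty$-gon is a pair $(i,j)$ of integers with $j-i\ge 2$. Two arcs $(i,j),(k,l)$ cross if $i<k<j<l$ or $k<i<l<j$. For a collection $\mathcal X$ of arcs, $\mathsf{nc}\,\mathcal X$ denotes the set of all arcs that cross no arc of $\mathcal X$. A Ptolemy diagram of the $\infty$-gon is a collection $\mathcal X$ of arcs such that whenever $(i,j),(r,s)\in\mathcal X$ cross with $i<r$, each of the pairs $(i,r),(i,s),(r,j),(j,s)$ which is an arc (i.e. whose entries differ by at least $2$) lies in $\mathcal X$. *)

theory Defs
  imports Main
begin

definition is_arc :: "int \<times> int \<Rightarrow> bool" where
  "is_arc a \<longleftrightarrow> snd a - fst a \<ge> 2"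

definition crosses :: "int \<times> int \<Rightarrow> int \<times> int \<Rightarrow> bool" where
  "crosses a b \<longleftrightarrow> (case a of (i, j) \<Rightarrow> case b of (k, l) \<Rightarrow>
      (i < k \<and> k < j \<and> j < l) \<or> (k < i \<and> i < l \<and> l < j))"

definition nc :: "(int \<times> int) set \<Rightarrow> (int \<times> int) set" where
  "nc X = {a. is_arc a \<and> (\<forall>b\<in>X. \<not> crosses a b)}"

definition ptolemy_diagram :: "(int \<times> int) set \<Rightarrow> bool" where
  "ptolemy_diagram X \<longleftrightarrow> (\<forall>a\<in>X. is_arc a) \<and>
     (\<forall>i j r s. (i, j) \<in> X \<and> (r, s) \<in> X \<and> crosses (i, j) (r, s) \<and> i < r \<longrightarrow>
        (\<forall>p \<in> {(i, r), (i, s), (r, j), (j, s)}. is_arc p \<longrightarrow> p \<in> X))"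

end

theory Submission
  imports Defs
begin

(* Let (i,j) and (r,s) be crossing arcs with i < r, so i < r < j < s.
   The four Ptolemy arcs (i,r), (i,s), (r,j), (j,s) have all their endpoints among
   i < r < j < s.  The key combinatorial fact is that any arc crossing one of them
   must also cross (i,j) or (r,s): its endpoints separate two of the four points,
   and every such separation is already a separation of i from j or of r from s.
   Hence if (i,j) and (r,s) cross nothing in X, neither does any Ptolemy arc, so
   the Ptolemy arcs that are arcs lie in nc X.  Since nc X consists of arcs by
   definition, nc X is a Ptolemy diagram; no hypothesis on X is needed. *)

lemma crosses_left_interleaved:
  assumes "crosses (i, j) (r, s)" and "i < r"
  shows "i < r \<and> r < j \<and> j < s"
  using assms by (auto simp: crosses_def)

lemma crosses_ptolemy_arc:
  assumes order: "i < r" "r < j" "j < s"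
    and p: "p \<in> {(i, r), (i, s), (r, j), (j, s)}"
    and cross: "crosses p (k, l)"
  shows "crosses (i, j) (k, l) \<or> crosses (r, s) (k, l)"
  using p cross order unfolding crosses_def by auto

lemma nc_is_arc: "a \<in> nc X \<Longrightarrow> is_arc a"
  by (simp add: nc_def)

lemma nc_ptolemy_closed:
  assumes ij: "(i, j) \<in> nc X" and rs: "(r, s) \<in> nc X"
    and cross: "crosses (i, j) (r, s)" and "i < r"
    and p: "p \<in> {(i, r), (i, s), (r, j), (j, s)}" and "is_arc p"
  shows "p \<in> nc X"
proof -
  have order: "i < r" "r < j" "j < s"
    using crosses_left_interleaved[OF cross \<open>i < r\<close>] by auto
  have "\<not> crosses p b" if "b \<in> X" for b
  proof
    assume "crosses p b"
    moreover obtain k l where b: "b = (k, l)" by fastforce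
    ultimately have "crosses (i, j) (k, l) \<or> crosses (r, s) (k, l)"
      using crosses_ptolemy_arc[OF order p] by simp
    then show False
      using ij rs \<open>b \<in> X\<close> b by (auto simp: nc_def)
  qed
  then show ?thesis
    using \<open>is_arc p\<close> by (simp add: nc_def)
qed

theorem mainTheorem2:
  assumes "\<forall>a\<in>X. is_arc a"
  shows "ptolemy_diagram (nc X)"
  unfolding ptolemy_diagram_def
  using nc_is_arc nc_ptolemy_closed by blast

end
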